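(* Let $q$ be a prime power, $m,u,v$ positive integers, and let $\mathbf y=(y_0,\dots,y_{v-1})\in\mathrm{GF}(q^m)^v$ have rank $w$. Then for every integer $s\ge w$, the number of vectors $\mathbf z=(z_0,\dots,z_{u-1})\in\mathrm{GF}(q^m)^u$ such that $\mathbf x=(\mathbf y,\mathbf z)\in\mathrm{GF}(q^m)^{u+v}$ has rank $s$ is exactly $${u\brack s-w}A(m-w,s-w)\,q^{wu}.$$
   Context: For a vector over $\mathrm{GF}(q^m)$, its rank is the dimension over $\mathrm{GF}(q)$ of the $\mathrm{GF}(q)$-span of its coordinates. $A(a,0)=1$ and $A(a,j)=\prod_{i=0}^{j-1}(q^a-q^i)$ for $j\ge1$; the Gaussian binomial is ${u\brack j}=A(u,j)/A(j,j)$ (which is $0$ when $j>u$). *)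

theory Defs
  imports "HOL-Algebra.Embedded_Algebras" "HOL-Computational_Algebra.Primes"
begin

definition rank_over :: "'a ring \<Rightarrow> 'a set \<Rightarrow> 'a list \<Rightarrow> nat" where
  "rank_over R K xs = ring.dim R K (ring.Span R K xs)"

definition A_fun :: "nat \<Rightarrow> nat \<Rightarrow> nat \<Rightarrow> real" where
  "A_fun q a j = (\<Prod>i<j. (real q ^ a - real q ^ i))"

definition gauss_binom :: "nat \<Rightarrow> nat \<Rightarrow> nat \<Rightarrow> real" where
  "gauss_binom q u j = A_fun q u j / A_fun q j j"

end

theory Submission
  imports Defs
begin

text \<open>Peel off the first coordinate a of z. If a lies in the span of y (q^w choices), the
  rank of (y, a) is still w; otherwise (q^m - q^w choices) it is w + 1. So the number N(u, w)
  of admissible z of length u satisfies N(u+1, w) = q^w N(u, w) + (q^m - q^w) N(u, w+1), the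
  recursion defining rank_extension_count, and the closed form satisfies the same recursion by
  the q-Pascal identity for Gaussian binomials.\<close>

lemma card_lists_length_Suc:
  assumes "finite A"
  shows "card {xs. length xs = Suc n \<and> set xs \<subseteq> A \<and> P xs}
       = (\<Sum>a\<in>A. card {xs. length xs = n \<and> set xs \<subseteq> A \<and> P (a # xs)})"
proof -
  define L where "L a = {xs. length xs = n \<and> set xs \<subseteq> A \<and> P (a # xs)}" for a
  have "{xs. length xs = Suc n \<and> set xs \<subseteq> A \<and> P xs} = (\<Union>a\<in>A. (#) a ` L a)"
    by (auto simp: L_def length_Suc_conv)
  moreover have "finite (L a)" for a
    using finite_lists_length_eq[OF assms, of n] by (rule rev_finite_subset) (auto simp: L_def)
  ultimately have "card {xs. length xs = Suc n \<and> set xs \<subseteq> A \<and> P xs}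
      = (\<Sum>a\<in>A. card ((#) a ` L a))"
    using assms by (auto intro: card_UN_disjoint)
  also have "\<dots> = (\<Sum>a\<in>A. card (L a))"
    by (intro sum.cong refl card_image) (simp add: inj_on_def)
  finally show ?thesis by (simp add: L_def)
qed

context ring
begin

lemma card_dimension:
  assumes K: "subfield K R" and "finite K" and "dimension n K E"
  shows "card E = card K ^ n"
proof -
  obtain Vs where Vs: "set Vs \<subseteq> carrier R" "independent K Vs" "length Vs = n" "Span K Vs = E"
    using exists_base[OF K assms(3)] by blast
  let ?coeffs = "{Ks. set Ks \<subseteq> K \<and> length Ks = n}"
  have image: "(\<lambda>Ks. combine Ks Vs) ` ?coeffs = E"
    using Span_eq_combine_set_length_version[OF K Vs(1)] Vs(3,4) by auto
  have "inj_on (\<lambda>Ks. combine Ks Vs) ?coeffs"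
  proof (rule inj_onI)
    fix Ks Ks' assume Ks: "Ks \<in> ?coeffs" "Ks' \<in> ?coeffs" "combine Ks Vs = combine Ks' Vs"
    then have "combine Ks Vs \<in> Span K Vs" using image Vs(4) by blast
    from unique_decomposition[OF K Vs(2) this] show "Ks = Ks'" using Ks Vs(3) by auto
  qed
  then have "card E = card ?coeffs" using card_image image by fastforce
  also have "\<dots> = card K ^ n" using card_lists_length_eq[OF \<open>finite K\<close>] by (simp add: conj_commute)
  finally show ?thesis .
qed

lemma dimension_dim_Span:
  assumes "subfield K R" and "set Us \<subseteq> carrier R"
  shows "dimension (dim K (Span K Us)) K (Span K Us)"
  using finite_dimensionE[OF assms(1) Span_finite_dimension[OF assms]] by (simp add: over_def)

lemma Span_Cons_mem:
  assumes K: "subfield K R" and Us: "set Us \<subseteq> carrier R" and a: "a \<in> Span K Us"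
  shows "Span K (a # Us) = Span K Us"
proof
  have "a \<in> carrier R" using Span_in_carrier[OF subfieldE(3)[OF K] Us] a by blast
  then show "Span K Us \<subseteq> Span K (a # Us)" using mono_Span[OF K Us] by blast
  have "set (a # Us) \<subseteq> Span K Us" using Span_base_incl[OF K Us] a by simp
  then show "Span K (a # Us) \<subseteq> Span K Us" by (rule mono_Span_subset[OF K _ Us])
qed

lemma dim_Span_Cons_not_mem:
  assumes K: "subfield K R" and Us: "set Us \<subseteq> carrier R"
    and "a \<in> carrier R" and "a \<notin> Span K Us"
  shows "dim K (Span K (a # Us)) = Suc (dim K (Span K Us))"
proof -
  have "dimension (Suc (dim K (Span K Us))) K (line_extension K a (Span K Us))"
    using Suc_dim[OF assms(3,4) dimension_dim_Span[OF K Us]] .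
  then show ?thesis using dimI[OF K] by (simp add: over_def)
qed

lemma dim_Span_le:
  assumes K: "subfield K R" and fin: "finite (carrier R)"
    and card_R: "card (carrier R) = card K ^ m" and "set Us \<subseteq> carrier R"
  shows "dim K (Span K Us) \<le> m"
proof -
  have "K \<subseteq> carrier R" using subfieldE(3)[OF K] .
  have "card {\<zero>, \<one>} \<le> card K"
    using subringE(2,3)[OF subfieldE(1)[OF K]] finite_subset[OF \<open>K \<subseteq> carrier R\<close> fin]
    by (intro card_mono) auto
  then have "1 < card K" using subfieldE(6)[OF K] by simp
  have "card K ^ dim K (Span K Us) = card (Span K Us)"
    using card_dimension[OF K finite_subset[OF \<open>K \<subseteq> carrier R\<close> fin]
        dimension_dim_Span[OF K assms(4)]] ..
  also have "\<dots> \<le> card K ^ m"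
    using card_mono[OF fin Span_in_carrier[OF \<open>K \<subseteq> carrier R\<close> assms(4)]] card_R by simp
  finally show ?thesis
    by (rule power_le_imp_le_exp[OF \<open>1 < card K\<close>])
qed

end

lemma A_fun_Suc: "A_fun q a (Suc j) = A_fun q a j * (real q ^ a - real q ^ j)"
  by (simp add: A_fun_def)

lemma A_fun_Suc_Suc: "A_fun q (Suc a) (Suc j) = (real q ^ Suc a - 1) * real q ^ j * A_fun q a j"
proof -
  have "A_fun q (Suc a) (Suc j) = (real q ^ Suc a - 1) * (\<Prod>i<j. real q ^ Suc a - real q ^ Suc i)"
    unfolding A_fun_def by (subst prod.lessThan_Suc_shift) simp
  also have "(\<Prod>i<j. real q ^ Suc a - real q ^ Suc i) = (\<Prod>i<j. real q * (real q ^ a - real q ^ i))"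
    by (simp add: algebra_simps)
  also have "\<dots> = real q ^ j * A_fun q a j"
    by (simp add: prod.distrib A_fun_def)
  finally show ?thesis by simp
qed

lemma A_fun_eq_0: "a < j \<Longrightarrow> A_fun q a j = 0"
  unfolding A_fun_def by (rule prod_zero) auto

lemma A_fun_diag_neq_0:
  assumes "1 < q"
  shows "A_fun q j j \<noteq> 0"
  using power_strict_increasing[of _ j "real q"] assms by (auto simp: A_fun_def)

lemma gauss_binom_eq_0: "u < j \<Longrightarrow> gauss_binom q u j = 0"
  by (simp add: gauss_binom_def A_fun_eq_0)

lemma gauss_binom_Suc_Suc:
  assumes q: "1 < q"
  shows "real q ^ j * gauss_binom q (Suc u) (Suc j)
       = real q ^ j * gauss_binom q u (Suc j) + real q ^ u * gauss_binom q u j"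
proof -
  define d where "d = real q ^ Suc j - 1"
  have "d \<noteq> 0" using one_less_power[of "real q" "Suc j"] q by (simp add: d_def)
  have diag: "A_fun q (Suc j) (Suc j) = d * real q ^ j * A_fun q j j"
    unfolding d_def by (rule A_fun_Suc_Suc)
  have "A_fun q j j \<noteq> 0" "0 < q" using A_fun_diag_neq_0[OF q] q by auto
  with \<open>d \<noteq> 0\<close>
  have upper: "d * gauss_binom q (Suc u) (Suc j) = (real q ^ Suc u - 1) * gauss_binom q u j"
    and lower: "d * (real q ^ j * gauss_binom q u (Suc j)) = (real q ^ u - real q ^ j) * gauss_binom q u j"
    unfolding gauss_binom_def diag A_fun_Suc_Suc[of q u j] A_fun_Suc[of q u j]
    by (simp_all add: field_simps)
  have "d * (real q ^ j * gauss_binom q (Suc u) (Suc j)) = real q ^ j * (d * gauss_binom q (Suc u) (Suc j))"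
    by (rule mult.left_commute)
  also have "\<dots> = real q ^ j * ((real q ^ Suc u - 1) * gauss_binom q u j)"
    by (simp only: upper)
  also have "\<dots> = ((real q ^ u - real q ^ j) + real q ^ u * d) * gauss_binom q u j"
    by (simp add: d_def algebra_simps)
  also have "\<dots> = d * (real q ^ j * gauss_binom q u (Suc j) + real q ^ u * gauss_binom q u j)"
    using lower by (simp add: algebra_simps)
  finally show ?thesis using \<open>d \<noteq> 0\<close> by simp
qed

fun rank_extension_count :: "nat \<Rightarrow> nat \<Rightarrow> nat \<Rightarrow> nat \<Rightarrow> nat \<Rightarrow> real" where
  "rank_extension_count q m 0 w s = (if s = w then 1 else 0)"
| "rank_extension_count q m (Suc u) w s =
     real q ^ w * rank_extension_count q m u w s
     + (real q ^ m - real q ^ w) * rank_extension_count q m u (Suc w) s"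

lemma rank_extension_count_eq_0:
  "s < w \<Longrightarrow> rank_extension_count q m u w s = 0"
  by (induction u arbitrary: w) auto

lemma rank_extension_count_closed_form:
  assumes q: "1 < q" and "w \<le> m" and "w \<le> s"
  shows "rank_extension_count q m u w s
       = gauss_binom q u (s - w) * A_fun q (m - w) (s - w) * real q ^ (w * u)"
  using assms(2,3)
proof (induction u arbitrary: w)
  case 0
  show ?case
  proof (cases "s = w")
    case True
    then show ?thesis by (simp add: gauss_binom_def A_fun_def)
  next
    case False
    then have "gauss_binom q 0 (s - w) = 0" using 0 by (intro gauss_binom_eq_0) simp
    with False show ?thesis by simp
  qed
next
  case (Suc u)
  consider "s = w" | j where "s = w + Suc j" "m = w" | j n where "s = w + Suc j" "m = w + Suc n"
  proof -
    have "s = w \<or> s = w + Suc (s - w - 1)" "m = w \<or> m = w + Suc (m - w - 1)"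
      using Suc.prems by auto
    with that show thesis by blast
  qed
  then show ?case
  proof cases
    case 1
    have "rank_extension_count q m u w s = real q ^ (w * u)"
      using Suc.IH[OF Suc.prems] 1 by (simp add: gauss_binom_def A_fun_def)
    moreover have "rank_extension_count q m u (Suc w) s = 0"
      using 1 by (simp add: rank_extension_count_eq_0)
    ultimately show ?thesis
      using 1 by (simp add: gauss_binom_def A_fun_def power_add mult_Suc_right)
  next
    case 2
    then have "rank_extension_count q m u w s = 0"
      using Suc.IH[OF Suc.prems] by (simp add: A_fun_eq_0)
    with 2 show ?thesis by (simp add: A_fun_eq_0)
  next
    case (3 j n)
    have IH: "rank_extension_count q m u w s
        = gauss_binom q u (Suc j) * A_fun q (Suc n) (Suc j) * real q ^ (w * u)"
      "rank_extension_count q m u (Suc w) s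
        = gauss_binom q u j * A_fun q n j * real q ^ (Suc w * u)"
      using Suc.IH[of w] Suc.IH[of "Suc w"] 3 by simp_all
    have "gauss_binom q (Suc u) (Suc j) * A_fun q (Suc n) (Suc j) * real q ^ (w * Suc u)
        = real q ^ (w * Suc u) * (real q ^ Suc n - 1) * A_fun q n j
          * (real q ^ j * gauss_binom q (Suc u) (Suc j))"
      by (simp add: A_fun_Suc_Suc)
    also have "\<dots> = real q ^ (w * Suc u) * (real q ^ Suc n - 1) * A_fun q n j
        * (real q ^ j * gauss_binom q u (Suc j) + real q ^ u * gauss_binom q u j)"
      by (simp only: gauss_binom_Suc_Suc[OF q])
    also have "\<dots> = rank_extension_count q m (Suc u) w s"
    proof -
      have "real q ^ (w * Suc u) = real q ^ w * real q ^ (w * u)"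
        "real q ^ (Suc w * u) = real q ^ u * real q ^ (w * u)"
        "real q ^ m - real q ^ w = real q ^ w * (real q ^ Suc n - 1)"
        by (simp_all add: 3 power_add algebra_simps)
      then show ?thesis
        unfolding rank_extension_count.simps IH A_fun_Suc_Suc
        by (simp only:) (simp add: algebra_simps del: power_Suc)
    qed
    finally show ?thesis using 3 by simp
  qed
qed

context ring
begin

lemma card_extensions_dim_Span:
  assumes K: "subfield K R" and fin: "finite (carrier R)"
    and card_R: "card (carrier R) = card K ^ m" and "set y \<subseteq> carrier R"
  shows "real (card {z. length z = u \<and> set z \<subseteq> carrier R \<and> dim K (Span K (y @ z)) = s})
       = rank_extension_count (card K) m u (dim K (Span K y)) s"
  using assms(4)
proof (induction u arbitrary: y)
  case 0
  have "{z. length z = 0 \<and> set z \<subseteq> carrier R \<and> dim K (Span K (y @ z)) = s}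
      = (if dim K (Span K y) = s then {[]} else {})"
    by auto
  then show ?case by simp
next
  case (Suc u)
  define W where "W = Span K y"
  define w where "w = dim K W"
  define Ext where "Ext y' = {z. length z = u \<and> set z \<subseteq> carrier R \<and> dim K (Span K (y' @ z)) = s}" for y'
  define N where "N y' = rank_extension_count (card K) m u (dim K (Span K y')) s" for y'
  have IH: "real (card (Ext y')) = N y'" if "set y' \<subseteq> carrier R" for y'
    unfolding Ext_def N_def by (rule Suc.IH[OF that])
  have W_sub: "W \<subseteq> carrier R"
    unfolding W_def by (rule Span_in_carrier[OF subfieldE(3)[OF K] Suc.prems])
  have card_W: "card W = card K ^ w"
    unfolding w_def W_def
    by (rule card_dimension[OF K _ dimension_dim_Span[OF K Suc.prems]])
       (rule finite_subset[OF subfieldE(3)[OF K] fin])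
  then have card_diff: "real (card (carrier R - W)) = real (card K) ^ m - real (card K) ^ w"
    using card_mono[OF fin W_sub] card_R card_Diff_subset[OF finite_subset[OF W_sub fin] W_sub]
    by (simp add: of_nat_diff)
  have Span_snoc: "Span K (y @ [a]) = Span K (a # y)" if "a \<in> carrier R" for a
    using Span_same_set[OF K, of "y @ [a]" "a # y"] Suc.prems that by simp
  have N_in: "N (y @ [a]) = rank_extension_count (card K) m u w s" if "a \<in> W" for a
    using Span_snoc Span_Cons_mem[OF K Suc.prems] that W_sub unfolding N_def W_def w_def by auto
  have N_out: "N (y @ [a]) = rank_extension_count (card K) m u (Suc w) s"
    if "a \<in> carrier R - W" for a
    using Span_snoc dim_Span_Cons_not_mem[OF K Suc.prems] that unfolding N_def W_def w_def by auto
  have "real (card {z. length z = Suc u \<and> set z \<subseteq> carrier R \<and> dim K (Span K (y @ z)) = s})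
      = (\<Sum>a\<in>carrier R. real (card (Ext (y @ [a]))))"
    by (simp add: card_lists_length_Suc[OF fin] Ext_def)
  also have "\<dots> = (\<Sum>a\<in>carrier R. N (y @ [a]))"
    using IH Suc.prems by (intro sum.cong refl) simp
  also have "\<dots> = (\<Sum>a\<in>carrier R - W. N (y @ [a])) + (\<Sum>a\<in>W. N (y @ [a]))"
    by (rule sum.subset_diff[OF W_sub fin])
  also have "\<dots> = (real (card K) ^ m - real (card K) ^ w)
        * rank_extension_count (card K) m u (Suc w) s
      + real (card K) ^ w * rank_extension_count (card K) m u w s"
    using N_in N_out card_diff card_W by simp
  finally show ?case unfolding w_def W_def by (simp add: algebra_simps del: Span.simps)
qed


end

theorem lemma8:
  fixes R :: "'a ring" and K :: "'a set" and q m u v w s :: nat and y :: "'a list"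
  assumes "\<exists>p k. prime p \<and> k > 0 \<and> q = p ^ k"
    and "field R" and "finite (carrier R)" and "card (carrier R) = q ^ m"
    and "subfield K R" and "card K = q"
    and "m > 0" and "u > 0" and "v > 0"
    and "length y = v" and "set y \<subseteq> carrier R"
    and "rank_over R K y = w"
    and "s \<ge> w"
  shows "real (card {z. length z = u \<and> set z \<subseteq> carrier R \<and> rank_over R K (y @ z) = s})
           = gauss_binom q u (s - w) * A_fun q (m - w) (s - w) * real q ^ (w * u)"
proof -
  interpret field R by fact
  obtain p k where "prime p" "0 < k" "q = p ^ k" using assms(1) by blast
  then have "1 < q" using prime_gt_1_nat one_less_power by blast
  have card_R: "card (carrier R) = card K ^ m" using assms(4,6) by simp
  have "w \<le> m"
    using dim_Span_le[OF assms(5,3) card_R assms(11)] assms(12) by (simp add: rank_over_def)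
  have "real (card {z. length z = u \<and> set z \<subseteq> carrier R \<and> rank_over R K (y @ z) = s})
      = rank_extension_count q m u w s"
    using card_extensions_dim_Span[OF assms(5,3) card_R assms(11)] assms(6,12)
    by (simp add: rank_over_def)
  also have "\<dots> = gauss_binom q u (s - w) * A_fun q (m - w) (s - w) * real q ^ (w * u)"
    by (rule rank_extension_count_closed_form[OF \<open>1 < q\<close> \<open>w \<le> m\<close> assms(13)])
  finally show ?thesis .
qed

end
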